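(* Let $n\ge1$, $m_1,\dots,m_n\ge1$ integers, $\mu\in(0,1)$, and let $X_{i,j}$, $i=1,\dots,n$, $j=1,\dots,m_i$, be i.i.d. $\mathrm{Bernoulli}(\mu)$. Define $\widehat\mu=\frac1n\sum_{i=1}^n\frac1{m_i}\sum_{j=1}^{m_i}X_{i,j}$ and, for $\lambda>0$, $M_\mu(\lambda)=\mathbb{E}\big[e^{n\lambda\,\mathrm{kl}(\widehat\mu\,|\,\mu)}\big]$. Let $m_{\min}=\min_i m_i$. If $\lambda>m_{\min}$, then $\sup_{0<\mu<1}M_\mu(\lambda)=+\infty$. In particular, there is no finite upper bound on $M_\mu(\lambda)$ that depends only on $n$ and $m_1,\dots,m_n$ and not on $\mu$.
   Context: $\mathrm{kl}(q|p)=q\log\frac qp+(1-q)\log\frac{1-q}{1-p}$ for $q\in[0,1]$, $p\in(0,1)$, with the convention $0\log 0=0$ (the KL divergence between Bernoulli distributions of means $q$ and $p$). *)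

theory Defs
  imports "HOL-Probability.Probability"
begin

definition kl :: "real \<Rightarrow> real \<Rightarrow> real" where
  "kl q p = (if q = 0 then 0 else q * ln (q / p))
          + (if q = 1 then 0 else (1 - q) * ln ((1 - q) / (1 - p)))"

text \<open>Index set of the sample: pairs (i,j) with i < n, j < m i (0-based).\<close>
definition idx :: "nat \<Rightarrow> (nat \<Rightarrow> nat) \<Rightarrow> (nat \<times> nat) set" where
  "idx n m = {(i, j). i < n \<and> j < m i}"

definition muhat :: "nat \<Rightarrow> (nat \<Rightarrow> nat) \<Rightarrow> (nat \<times> nat \<Rightarrow> bool) \<Rightarrow> real" where
  "muhat n m X = (1 / real n) * (\<Sum>i<n. (1 / real (m i)) * (\<Sum>j<m i. of_bool (X (i, j))))"

definition sample_pmf :: "nat \<Rightarrow> (nat \<Rightarrow> nat) \<Rightarrow> real \<Rightarrow> (nat \<times> nat \<Rightarrow> bool) pmf" where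
  "sample_pmf n m \<mu> = Pi_pmf (idx n m) False (\<lambda>_. bernoulli_pmf \<mu>)"

definition M :: "nat \<Rightarrow> (nat \<Rightarrow> nat) \<Rightarrow> real \<Rightarrow> real \<Rightarrow> real" where
  "M n m \<mu> lam = measure_pmf.expectation (sample_pmf n m \<mu>)
                  (\<lambda>X. exp (real n * lam * kl (muhat n m X) \<mu>))"

end

(*
  Let k = m i0 be the smallest group size and c the number of remaining observations.
  The sample in which group i0 consists of ones and everything else of zeros has
  probability mu^k (1 - mu)^c and empirical mean 1/n, and n kl(1/n | mu) >= ln (1/(n mu)) - 1.
  Hence M_mu(lam) >= e^(-lam (ln n + 1)) (1 - mu)^c mu^(k - lam), which blows up as
  mu -> 0 as soon as lam > k.
*)
theory Submission
  imports Defs "HOL-Real_Asymp.Real_Asymp"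
begin

lemma kl_ge_linearized:
  fixes q p :: real
  assumes "0 \<le> q" "q \<le> 1" "0 < p" "p < 1"
  shows "q * ln (q / p) + p - q \<le> kl q p"
proof (cases "q = 1")
  case True
  then show ?thesis using assms by (simp add: kl_def)
next
  case False
  then have "q < 1" using assms by simp
  have "ln ((1 - p) / (1 - q)) \<le> (1 - p) / (1 - q) - 1"
    using \<open>q < 1\<close> assms by (intro ln_le_minus_one) auto
  then have "(1 - q) * (1 - (1 - p) / (1 - q)) \<le> (1 - q) * ln ((1 - q) / (1 - p))"
    using \<open>q < 1\<close> assms by (intro mult_left_mono) (auto simp: ln_div)
  also have "(1 - q) * (1 - (1 - p) / (1 - q)) = p - q"
    using \<open>q < 1\<close> by (simp add: field_simps)
  finally show ?thesis
    using False by (cases "q = 0") (auto simp: kl_def)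
qed

lemma kl_inverse_nat_ge:
  assumes "n \<ge> 1" "0 < \<mu>" "\<mu> < 1"
  shows "- ln (real n) - 1 - ln \<mu> \<le> real n * kl (1 / real n) \<mu>"
proof -
  have "1 / real n * ln (1 / real n / \<mu>) + \<mu> - 1 / real n \<le> kl (1 / real n) \<mu>"
    using assms by (intro kl_ge_linearized) auto
  then have "(ln (1 / real n / \<mu>) - 1) / real n \<le> kl (1 / real n) \<mu>"
    using assms by (simp add: diff_divide_distrib)
  then have "ln (1 / real n / \<mu>) - 1 \<le> real n * kl (1 / real n) \<mu>"
    using assms by (simp add: divide_le_eq mult.commute)
  then show ?thesis
    using assms by (simp add: ln_div ln_mult)
qed

lemma pmf_times_le_expectation:
  fixes f :: "'a \<Rightarrow> real"
  assumes "finite (set_pmf P)" "\<And>y. 0 \<le> f y"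
  shows "f x * pmf P x \<le> measure_pmf.expectation P f"
proof (cases "x \<in> set_pmf P")
  case True
  have "f x * pmf P x \<le> (\<Sum>y\<in>set_pmf P. f y * pmf P y)"
    using True assms by (intro member_le_sum) auto
  also have "\<dots> = measure_pmf.expectation P f"
    using assms by (intro integral_measure_pmf_real[symmetric]) auto
  finally show ?thesis .
next
  case False
  then show ?thesis
    using assms by (simp add: set_pmf_iff integral_nonneg_AE)
qed

lemma pmf_Pi_bernoulli:
  assumes "finite A" "\<And>x. x \<notin> A \<Longrightarrow> \<not> X x" "0 \<le> \<mu>" "\<mu> \<le> 1"
  shows "pmf (Pi_pmf A False (\<lambda>_. bernoulli_pmf \<mu>)) X
           = \<mu> ^ card {x\<in>A. X x} * (1 - \<mu>) ^ card {x\<in>A. \<not> X x}"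
proof -
  have "pmf (Pi_pmf A False (\<lambda>_. bernoulli_pmf \<mu>)) X = (\<Prod>x\<in>A. if X x then \<mu> else 1 - \<mu>)"
    using assms by (subst pmf_Pi') (auto intro!: prod.cong)
  also have "\<dots> = \<mu> ^ card {x\<in>A. X x} * (1 - \<mu>) ^ card {x\<in>A. \<not> X x}"
    using assms(1) by (simp add: prod.If_cases Int_def set_diff_eq conj_commute)
  finally show ?thesis .
qed

lemma finite_idx: "finite (idx n m)"
proof -
  have "idx n m = Sigma {..<n} (\<lambda>i. {..<m i})"
    by (auto simp: idx_def)
  then show ?thesis by simp
qed

lemma finite_set_pmf_sample_pmf: "finite (set_pmf (sample_pmf n m \<mu>))"
  unfolding sample_pmf_def
  by (rule finite_subset[OF set_Pi_pmf_subset'[OF finite_idx]])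
     (auto intro!: finite_PiE_dflt finite_idx)

definition group_ones :: "nat \<Rightarrow> (nat \<Rightarrow> nat) \<Rightarrow> nat \<times> nat \<Rightarrow> bool" where
  "group_ones i0 m = (\<lambda>(i, j). i = i0 \<and> j < m i0)"

lemma muhat_group_ones:
  assumes "i0 < n" "m i0 \<ge> 1"
  shows "muhat n m (group_ones i0 m) = 1 / real n"
proof -
  have "(\<Sum>j<m i. of_bool (group_ones i0 m (i, j)) :: real) = (if i = i0 then real (m i) else 0)" for i
    by (cases "i = i0") (simp_all add: group_ones_def)
  then have "(\<Sum>i<n. 1 / real (m i) * (\<Sum>j<m i. of_bool (group_ones i0 m (i, j)))) =
        (\<Sum>i<n. if i = i0 then 1 else 0 :: real)"
    using assms by (intro sum.cong) auto
  also have "\<dots> = 1"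
    using assms by simp
  finally show ?thesis
    by (simp add: muhat_def)
qed

lemma pmf_sample_pmf_group_ones:
  assumes "i0 < n" "0 \<le> \<mu>" "\<mu> \<le> 1"
  shows "pmf (sample_pmf n m \<mu>) (group_ones i0 m)
           = \<mu> ^ m i0 * (1 - \<mu>) ^ (card (idx n m) - m i0)"
proof -
  let ?A = "idx n m" and ?X = "group_ones i0 m"
  have ones: "{x\<in>?A. ?X x} = {i0} \<times> {..<m i0}"
    using assms by (auto simp: idx_def group_ones_def)
  have "card {x\<in>?A. \<not> ?X x} = card ?A - card {x\<in>?A. ?X x}"
    using finite_idx by (subst card_Diff_subset[symmetric]) (auto intro: arg_cong[where f = card])
  moreover have "\<not> ?X x" if "x \<notin> ?A" for x
    using that assms by (auto simp: idx_def group_ones_def)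
  ultimately show ?thesis
    using assms finite_idx ones by (simp add: sample_pmf_def pmf_Pi_bernoulli card_cartesian_product)
qed

lemma M_ge_group_ones:
  assumes "n \<ge> 1" "i0 < n" "m i0 \<ge> 1" "lam \<ge> 0" "0 < \<mu>" "\<mu> < 1"
  shows "exp (- lam * (ln (real n) + 1)) * (1 - \<mu>) ^ (card (idx n m) - m i0)
           * \<mu> powr (real (m i0) - lam) \<le> M n m \<mu> lam"
proof -
  let ?X = "group_ones i0 m" and ?c = "card (idx n m) - m i0"
  have "lam * (- ln (real n) - 1 - ln \<mu>) \<le> lam * (real n * kl (1 / real n) \<mu>)"
    using assms by (intro mult_left_mono kl_inverse_nat_ge) auto
  also have "\<dots> = real n * lam * kl (muhat n m ?X) \<mu>"
    using assms by (simp add: muhat_group_ones)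
  finally have "lam * (- ln (real n) - 1 - ln \<mu>) \<le> real n * lam * kl (muhat n m ?X) \<mu>" .
  then have "exp (- lam * (ln (real n) + 1)) * \<mu> powr (- lam)
               \<le> exp (real n * lam * kl (muhat n m ?X) \<mu>)"
    using assms by (simp add: powr_def algebra_simps flip: exp_add)
  then have "exp (- lam * (ln (real n) + 1)) * \<mu> powr (- lam) * pmf (sample_pmf n m \<mu>) ?X
               \<le> M n m \<mu> lam"
    unfolding M_def
    by (intro order.trans[OF mult_right_mono pmf_times_le_expectation] finite_set_pmf_sample_pmf) auto
  moreover have "\<mu> powr (- lam) * pmf (sample_pmf n m \<mu>) ?X = (1 - \<mu>) ^ ?c * \<mu> powr (real (m i0) - lam)"
    using assms by (simp add: pmf_sample_pmf_group_ones powr_diff powr_minus_divide powr_realpow field_simps)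
  ultimately show ?thesis
    by (simp add: mult.assoc)
qed

lemma SUP_greaterThanLessThan_eq_infinity:
  fixes f :: "real \<Rightarrow> real"
  assumes "filterlim f at_top (at_right a)" "a < b"
  shows "(SUP x\<in>{a<..<b}. ereal (f x)) = \<infinity>"
  unfolding top_ereal_def[symmetric] SUP_eq_top_iff
proof (intro allI impI)
  fix y :: ereal
  assume "y < \<top>"
  then obtain B where "y \<le> ereal B"
    by (cases y) auto
  have "\<forall>\<^sub>F x in at_right a. B < f x \<and> x \<in> {a<..<b}"
    using filterlim_at_top_dense[THEN iffD1, OF assms(1)] eventually_at_right_real[OF assms(2)]
    by (auto intro: eventually_conj)
  then obtain x where "B < f x" "x \<in> {a<..<b}"
    using eventually_happens'[OF trivial_limit_at_right_real] by blast
  then show "\<exists>x\<in>{a<..<b}. y < ereal (f x)"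
    using le_less_trans[OF \<open>y \<le> ereal B\<close>, of "ereal (f x)"] by auto
qed

theorem lemma1:
  fixes n :: nat and m :: "nat \<Rightarrow> nat" and lam :: real
  assumes "n \<ge> 1"
    and "\<And>i. i < n \<Longrightarrow> m i \<ge> 1"
    and "lam > real (Min (m ` {..<n}))"
  shows "(SUP \<mu>\<in>{0<..<1}. ereal (M n m \<mu> lam)) = \<infinity>"
proof -
  have "Min (m ` {..<n}) \<in> m ` {..<n}"
    using assms(1) by (intro Min_in) (auto simp: lessThan_empty_iff)
  then obtain i0 where i0: "i0 < n" "m i0 = Min (m ` {..<n})"
    by (metis imageE lessThan_iff)
  define C where "C = exp (- lam * (ln (real n) + 1))"
  define c where "c = card (idx n m) - m i0"
  have "C > 0" "real (m i0) - lam < 0"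
    using assms(3) i0 by (auto simp: C_def)
  then have "filterlim (\<lambda>\<mu>. C * (1 - \<mu>) ^ c * \<mu> powr (real (m i0) - lam)) at_top (at_right 0)"
    by real_asymp
  moreover have "\<forall>\<^sub>F \<mu> in at_right 0. C * (1 - \<mu>) ^ c * \<mu> powr (real (m i0) - lam) \<le> M n m \<mu> lam"
    using eventually_at_right_real[OF zero_less_one]
  proof (rule eventually_mono)
    fix \<mu> :: real
    assume "\<mu> \<in> {0<..<1}"
    then show "C * (1 - \<mu>) ^ c * \<mu> powr (real (m i0) - lam) \<le> M n m \<mu> lam"
      unfolding C_def c_def using assms(1,2) i0(1) \<open>real (m i0) - lam < 0\<close>
      by (intro M_ge_group_ones) auto
  qed
  ultimately have "filterlim (\<lambda>\<mu>. M n m \<mu> lam) at_top (at_right 0)"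
    by (rule filterlim_at_top_mono)
  then show ?thesis
    by (rule SUP_greaterThanLessThan_eq_infinity) simp
qed

end
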